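(* Let $\mathcal{A}$ be a Mrówka family on $\omega$, and let $X$ and $f\colon X\to\Psi(\mathcal{A})$ be as defined in the context. If $Z$ is a zero-set in $X$, then $f(Z)$ is a zero-set in $\Psi(\mathcal{A})$.
   Context: For a maximal almost disjoint (MAD) family $\mathcal{A}$ of infinite subsets of $\omega$, $\Psi(\mathcal{A})$ is the space with underlying set $\omega\cup\mathcal{A}$ in which points of $\omega$ are isolated and a basic neighbourhood of $A\in\mathcal{A}$ is $\{A\}\cup\{m\in A: m\ge n\}$ for $n\in\omega$. A Mrówka family is a MAD family $\mathcal{A}$ on $\omega$ such that $\Psi(\mathcal{A})$ is almost compact, i.e. its Čech–Stone compactification equals its one-point compactification. Let $K=\{0,1\}^\omega$ be the Cantor set. The space $X$ has underlying set $(\omega\times K)\cup\mathcal{A}$; a basic neighbourhood of $\langle n,k\rangle$ ($n\in\omega$, $k\in K$) is $\{n\}\times C$ with $C$ an open neighbourhood of $k$ in $K$, and a basic neighbourhood of $A\in\mathcal{A}$ is $U_n(A)=\{A\}\cup\bigcup\{\{m\}\times K: m\in A, m\ge n\}$ for $n\in\omega$. The map $f\colon X\to\Psi(\mathcal{A})$ sends $A\in\mathcal{A}$ to $A$ and every point of $\{n\}\times K$ to $n$. A zero-set in a space $S$ is a set of the form $\xi^{-1}(0)$ for a continuous $\xi\colon S\to[0,1]$. *)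

theory Defs
  imports "HOL-Analysis.Analysis"
begin

definition MAD :: "nat set set \<Rightarrow> bool" where
  "MAD \<A> \<longleftrightarrow> infinite \<A> \<and> (\<forall>A\<in>\<A>. infinite A)
     \<and> (\<forall>A\<in>\<A>. \<forall>B\<in>\<A>. A \<noteq> B \<longrightarrow> finite (A \<inter> B))
     \<and> (\<forall>B. infinite B \<longrightarrow> (\<exists>A\<in>\<A>. infinite (A \<inter> B)))"

text \<open>The space Psi(A): points of omega are Inl n, points of A are Inr A.\<close>
definition Psi :: "nat set set \<Rightarrow> (nat + nat set) topology" where
  "Psi \<A> = topology_generated_by
     ({{Inl n} | n. True} \<union>
      {insert (Inr A) (Inl ` {m\<in>A. n \<le> m}) | A n. A \<in> \<A>})"

definition Cantor :: "(nat \<Rightarrow> bool) topology" where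
  "Cantor = product_topology (\<lambda>_. discrete_topology UNIV) UNIV"

definition Xsp :: "nat set set \<Rightarrow> ((nat \<times> (nat \<Rightarrow> bool)) + nat set) topology" where
  "Xsp \<A> = topology_generated_by
     ({Inl ` ({n} \<times> C) | n C. openin Cantor C} \<union>
      {insert (Inr A) (Inl ` ({m\<in>A. n \<le> m} \<times> UNIV)) | A n. A \<in> \<A>})"

fun fmap :: "((nat \<times> (nat \<Rightarrow> bool)) + nat set) \<Rightarrow> (nat + nat set)" where
  "fmap (Inl (n, k)) = Inl n"
| "fmap (Inr A) = Inr A"

definition zero_set_in :: "'a topology \<Rightarrow> 'a set \<Rightarrow> bool" where
  "zero_set_in T Z \<longleftrightarrow> (\<exists>\<xi>. continuous_map T (top_of_set {0..1::real}) \<xi>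
       \<and> Z = {x \<in> topspace T. \<xi> x = 0})"

text \<open>Almost compact: the Cech-Stone compactification equals the one-point
  compactification, i.e. every continuous map into [0,1] extends continuously to the
  one-point compactification (the point at infinity), i.e. converges at infinity.\<close>
definition almost_compact :: "'a topology \<Rightarrow> bool" where
  "almost_compact T \<longleftrightarrow>
     (\<forall>\<xi>. continuous_map T (top_of_set {0..1::real}) \<xi> \<longrightarrow>
        (\<exists>c. \<forall>e>0. \<exists>K. compactin T K \<and> (\<forall>x\<in>topspace T - K. \<bar>\<xi> x - c\<bar> < e)))"

definition Mrowka :: "nat set set \<Rightarrow> bool" where
  "Mrowka \<A> \<longleftrightarrow> MAD \<A> \<and> almost_compact (Psi \<A>)"

end

theory Submission
  imports Defs
begin

text \<open>Let \<open>\<xi>\<close> witness that \<open>Z\<close> is a zero-set of \<open>X\<close>. Choose in every fibre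
  \<open>{n} \<times> K\<close> a point where \<open>\<xi>\<close> vanishes, if there is one, and any point otherwise; together
  with the identity on \<open>\<A>\<close> this is a section \<open>s\<close> of \<open>f\<close>, and \<open>\<xi> \<circ> s\<close> vanishes exactly
  on \<open>f(Z)\<close>. Points of \<open>\<omega>\<close> are isolated in \<open>\<Psi>(\<A>)\<close>, so \<open>\<xi> \<circ> s\<close> need only be checked
  to be continuous at each \<open>A \<in> \<A>\<close>; there it is, because every neighbourhood of \<open>A\<close> in \<open>X\<close>
  contains whole fibres \<open>{m} \<times> K\<close> for all large \<open>m \<in> A\<close>, on which \<open>\<xi>\<close> is therefore
  uniformly close to \<open>\<xi>(A)\<close>. No use is made of the Mrowka property.\<close>

lemma generate_topology_on_decseq_nhds:
  assumes "generate_topology_on \<S> U" "x \<in> U" "decseq N"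
    and "\<And>s. s \<in> \<S> \<Longrightarrow> x \<in> s \<Longrightarrow> \<exists>n. N n \<subseteq> s"
  shows "\<exists>n. N n \<subseteq> U"
  using assms(1,2)
proof (induction rule: generate_topology_on.induct)
  case (Int a b)
  then obtain m n where "N m \<subseteq> a" "N n \<subseteq> b" by auto
  moreover have "N (max m n) \<subseteq> N m" "N (max m n) \<subseteq> N n"
    using \<open>decseq N\<close> by (simp_all add: decseqD)
  ultimately show ?case by blast
next
  case (UN K)
  then show ?case by blast
next
  case (Basis s)
  then show ?case by (rule assms(4))
qed simp

lemma topspace_Cantor: "topspace Cantor = UNIV"
  unfolding Cantor_def by (simp add: PiE_UNIV_domain)

lemma topspace_Xsp: "topspace (Xsp \<A>) = range Inl \<union> Inr ` \<A>"
proof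
  show "topspace (Xsp \<A>) \<subseteq> range Inl \<union> Inr ` \<A>"
    unfolding Xsp_def topology_generated_by_topspace by (rule Union_least) auto
  have "Inl (n, k) \<in> topspace (Xsp \<A>)" for n k
  proof -
    have "openin Cantor UNIV"
      using openin_topspace[of Cantor] by (simp add: topspace_Cantor)
    then have "Inl ` ({n} \<times> UNIV) \<in> {Inl ` ({n} \<times> C) | n C. openin Cantor C}"
      by blast
    then show ?thesis
      unfolding Xsp_def topology_generated_by_topspace by (rule UnionI[OF UnI1]) simp
  qed
  moreover have "Inr A \<in> topspace (Xsp \<A>)" if "A \<in> \<A>" for A
  proof -
    have "insert (Inr A) (Inl ` ({m\<in>A. 0 \<le> m} \<times> UNIV))
      \<in> {insert (Inr A) (Inl ` ({m\<in>A. n \<le> m} \<times> UNIV)) | A n. A \<in> \<A>}"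
      using that by blast
    then show ?thesis
      unfolding Xsp_def topology_generated_by_topspace by (rule UnionI[OF UnI2]) simp
  qed
  ultimately show "range Inl \<union> Inr ` \<A> \<subseteq> topspace (Xsp \<A>)"
    by auto
qed

lemma topspace_Psi: "topspace (Psi \<A>) = range Inl \<union> Inr ` \<A>"
proof
  show "topspace (Psi \<A>) \<subseteq> range Inl \<union> Inr ` \<A>"
    unfolding Psi_def topology_generated_by_topspace by (rule Union_least) auto
  have "Inl n \<in> topspace (Psi \<A>)" for n
    unfolding Psi_def topology_generated_by_topspace by (rule UnionI[OF UnI1]) auto
  moreover have "Inr A \<in> topspace (Psi \<A>)" if "A \<in> \<A>" for A
  proof -
    have "insert (Inr A) (Inl ` {m\<in>A. 0 \<le> m})
      \<in> {insert (Inr A) (Inl ` {m\<in>A. n \<le> m}) | A n. A \<in> \<A>}"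
      using that by blast
    then show ?thesis
      unfolding Psi_def topology_generated_by_topspace by (rule UnionI[OF UnI2]) simp
  qed
  ultimately show "range Inl \<union> Inr ` \<A> \<subseteq> topspace (Psi \<A>)"
    by auto
qed

lemma openin_Psi_Inl: "openin (Psi \<A>) {Inl n}"
  unfolding Psi_def by (rule topology_generated_by_Basis) blast

lemma openin_Psi_Inr_tail:
  "A \<in> \<A> \<Longrightarrow> openin (Psi \<A>) (insert (Inr A) (Inl ` {m\<in>A. n \<le> m}))"
  unfolding Psi_def by (rule topology_generated_by_Basis) blast

lemma Xsp_nhds_Inr:
  assumes "openin (Xsp \<A>) V" "Inr A \<in> V"
  shows "\<exists>n. insert (Inr A) (Inl ` ({m\<in>A. n \<le> m} \<times> UNIV)) \<subseteq> V"
proof (rule generate_topology_on_decseq_nhds)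
  show "generate_topology_on
     ({Inl ` ({n} \<times> C) | n C. openin Cantor C} \<union>
      {insert (Inr A) (Inl ` ({m\<in>A. n \<le> m} \<times> UNIV)) | A n. A \<in> \<A>}) V"
    using assms(1) unfolding Xsp_def openin_topology_generated_by_iff .
  show "decseq (\<lambda>n. insert (Inr A) (Inl ` ({m\<in>A. n \<le> m} \<times> (UNIV :: (nat \<Rightarrow> bool) set))))"
    by (rule decseq_SucI) auto
  fix s assume "s \<in> {Inl ` ({n} \<times> C) | n C. openin Cantor C} \<union>
      {insert (Inr A) (Inl ` ({m\<in>A. n \<le> m} \<times> UNIV)) | A n. A \<in> \<A>}" "Inr A \<in> s"
  then obtain B n where "s = insert (Inr B) (Inl ` ({m\<in>B. n \<le> m} \<times> UNIV))" "Inr A \<in> s"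
    by blast
  then show "\<exists>n. insert (Inr A) (Inl ` ({m\<in>A. n \<le> m} \<times> UNIV)) \<subseteq> s"
    by blast
qed (rule assms(2))

lemma continuous_map_PsiI:
  fixes g :: "nat + nat set \<Rightarrow> 'b::metric_space"
  assumes into: "g ` topspace (Psi \<A>) \<subseteq> S"
    and conv: "\<And>A e. A \<in> \<A> \<Longrightarrow> e > 0 \<Longrightarrow>
      \<exists>n. \<forall>m\<in>A. n \<le> m \<longrightarrow> dist (g (Inl m)) (g (Inr A)) < e"
  shows "continuous_map (Psi \<A>) (top_of_set S) g"
  unfolding continuous_map
proof (intro conjI allI impI)
  show "g ` topspace (Psi \<A>) \<subseteq> topspace (top_of_set S)"
    using into by simp
  fix U assume U: "openin (top_of_set S) U"
  show "openin (Psi \<A>) {x \<in> topspace (Psi \<A>). g x \<in> U}"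
  proof (subst openin_subopen, intro ballI)
    fix y assume y: "y \<in> {x \<in> topspace (Psi \<A>). g x \<in> U}"
    show "\<exists>T. openin (Psi \<A>) T \<and> y \<in> T \<and> T \<subseteq> {x \<in> topspace (Psi \<A>). g x \<in> U}"
    proof (cases y)
      case (Inl n)
      with y show ?thesis
        by (intro exI[of _ "{Inl n}"]) (simp add: openin_Psi_Inl)
    next
      case (Inr A)
      with y have A: "A \<in> \<A>" and "g (Inr A) \<in> U"
        by (auto simp: topspace_Psi)
      then obtain e where "e > 0" and e: "\<And>t. t \<in> S \<Longrightarrow> dist t (g (Inr A)) < e \<Longrightarrow> t \<in> U"
        using U unfolding openin_euclidean_subtopology_iff by metis
      obtain n where n: "\<forall>m\<in>A. n \<le> m \<longrightarrow> dist (g (Inl m)) (g (Inr A)) < e"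
        using conv[OF A \<open>e > 0\<close>] by blast
      have "g (Inl m) \<in> U" if "m \<in> A" "n \<le> m" for m
      proof (rule e)
        show "g (Inl m) \<in> S"
          using into by (auto simp: topspace_Psi)
        show "dist (g (Inl m)) (g (Inr A)) < e"
          using n that by blast
      qed
      then have "insert (Inr A) (Inl ` {m\<in>A. n \<le> m}) \<subseteq> {x \<in> topspace (Psi \<A>). g x \<in> U}"
        using A \<open>g (Inr A) \<in> U\<close> by (auto simp: topspace_Psi)
      with Inr show ?thesis
        by (intro exI[of _ "insert (Inr A) (Inl ` {m\<in>A. n \<le> m})"]) (simp add: openin_Psi_Inr_tail A)
    qed
  qed
qed

lemma continuous_map_Xsp_fibres_converge:
  fixes \<xi> :: "(nat \<times> (nat \<Rightarrow> bool)) + nat set \<Rightarrow> 'b::metric_space"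
  assumes "continuous_map (Xsp \<A>) (top_of_set S) \<xi>" "A \<in> \<A>" "e > 0"
  shows "\<exists>n. \<forall>m\<in>A. n \<le> m \<longrightarrow> (\<forall>k. dist (\<xi> (Inl (m, k))) (\<xi> (Inr A)) < e)"
proof -
  let ?V = "{x \<in> topspace (Xsp \<A>). \<xi> x \<in> ball (\<xi> (Inr A)) e}"
  have "continuous_map (Xsp \<A>) euclidean \<xi>"
    using assms(1) continuous_map_in_subtopology by blast
  then have "openin (Xsp \<A>) ?V"
    by (rule openin_continuous_map_preimage) simp
  moreover have "Inr A \<in> ?V"
    using assms(2,3) by (simp add: topspace_Xsp)
  ultimately obtain n where n: "insert (Inr A) (Inl ` ({m\<in>A. n \<le> m} \<times> UNIV)) \<subseteq> ?V"
    by (blast dest: Xsp_nhds_Inr)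
  have "dist (\<xi> (Inl (m, k))) (\<xi> (Inr A)) < e" if "m \<in> A" "n \<le> m" for m k
  proof -
    have "Inl (m, k) \<in> ?V"
      using n that by blast
    then show ?thesis
      by (simp add: dist_commute)
  qed
  then show ?thesis
    by blast
qed

lemma fmap_in_topspace_iff: "fmap x \<in> topspace (Psi \<A>) \<longleftrightarrow> x \<in> topspace (Xsp \<A>)"
  by (cases x rule: fmap.cases) (auto simp: topspace_Psi topspace_Xsp)

text \<open>If \<open>\<xi>\<close> has no zero on the fibre over \<open>n\<close>, the \<open>SOME\<close> picks an unspecified point
  of that fibre.\<close>
definition vanishing_section ::
    "((nat \<times> (nat \<Rightarrow> bool)) + nat set \<Rightarrow> 'b::zero) \<Rightarrow> nat + nat set \<Rightarrow> (nat \<times> (nat \<Rightarrow> bool)) + nat set"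
  where "vanishing_section \<xi> y =
    (case y of Inl n \<Rightarrow> Inl (n, SOME k. \<xi> (Inl (n, k)) = 0) | Inr A \<Rightarrow> Inr A)"

lemma fmap_vanishing_section [simp]: "fmap (vanishing_section \<xi> y) = y"
  by (cases y) (simp_all add: vanishing_section_def)

lemma fmap_eq_Inl_iff: "fmap x = Inl n \<longleftrightarrow> (\<exists>k. x = Inl (n, k))"
  by (cases x rule: fmap.cases) auto

lemma fmap_eq_Inr_iff: "fmap x = Inr A \<longleftrightarrow> x = Inr A"
  by (cases x rule: fmap.cases) auto

lemma vanishing_section_eq_0_iff:
  "\<xi> (vanishing_section \<xi> y) = 0 \<longleftrightarrow> (\<exists>x. fmap x = y \<and> \<xi> x = 0)"
proof (cases y)
  case (Inl n)
  then show ?thesis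
    by (auto simp: vanishing_section_def fmap_eq_Inl_iff intro: someI[where P = "\<lambda>k. \<xi> (Inl (n, k)) = 0"])
next
  case (Inr A)
  then show ?thesis
    by (simp add: vanishing_section_def fmap_eq_Inr_iff)
qed

lemma fmap_image_zero_set:
  "fmap ` {x \<in> topspace (Xsp \<A>). \<xi> x = 0}
    = {y \<in> topspace (Psi \<A>). \<xi> (vanishing_section \<xi> y) = 0}"
  unfolding vanishing_section_eq_0_iff by (auto simp: fmap_in_topspace_iff)

lemma continuous_map_vanishing_section:
  fixes \<xi> :: "(nat \<times> (nat \<Rightarrow> bool)) + nat set \<Rightarrow> 'b::{metric_space, zero}"
  assumes "continuous_map (Xsp \<A>) (top_of_set S) \<xi>"
  shows "continuous_map (Psi \<A>) (top_of_set S) (\<lambda>y. \<xi> (vanishing_section \<xi> y))"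
proof (rule continuous_map_PsiI)
  show "(\<lambda>y. \<xi> (vanishing_section \<xi> y)) ` topspace (Psi \<A>) \<subseteq> S"
    using continuous_map_image_subset_topspace[OF assms]
    by (auto simp flip: fmap_in_topspace_iff[of "vanishing_section \<xi> _"])
  fix A and e :: real
  assume "A \<in> \<A>" "e > 0"
  then obtain n where "\<forall>m\<in>A. n \<le> m \<longrightarrow> (\<forall>k. dist (\<xi> (Inl (m, k))) (\<xi> (Inr A)) < e)"
    using continuous_map_Xsp_fibres_converge[OF assms] by blast
  then show "\<exists>n. \<forall>m\<in>A. n \<le> m \<longrightarrow>
      dist (\<xi> (vanishing_section \<xi> (Inl m))) (\<xi> (vanishing_section \<xi> (Inr A))) < e"
    by (auto simp: vanishing_section_def)
qed

theorem lemma3p3: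
  assumes "Mrowka \<A>"
    and "zero_set_in (Xsp \<A>) Z"
  shows "zero_set_in (Psi \<A>) (fmap ` Z)"
proof -
  obtain \<xi> where \<xi>: "continuous_map (Xsp \<A>) (top_of_set {0..1::real}) \<xi>"
    and Z: "Z = {x \<in> topspace (Xsp \<A>). \<xi> x = 0}"
    using assms(2) unfolding zero_set_in_def by blast
  show ?thesis
    unfolding zero_set_in_def Z fmap_image_zero_set
    using continuous_map_vanishing_section[OF \<xi>] by blast
qed

end
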